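(* Determining whether an inductive validity core is minimal is as hard as model checking. Precisely: for any transition system $(I,T)$ and any safety property $P$ that is not a tautology, one can effectively construct a transition system $(I^*,T^* )$ with a safety property $P^*$ such that $(I^*,T^* )\vdash P^*$, together with an inductive validity core $S$ for $(I^*,T^* )\vdash P^*$, such that $S$ is minimal if and only if $(I,T)\nvdash P$.
   Context: A transition system $(I,T)$ over a state space $\Sigma$ consists of an initial-state predicate $I:\Sigma\to\mathit{bool}$ and a transition predicate $T:\Sigma\times\Sigma\to\mathit{bool}$. The reachable-state predicate $R$ of $(I,T)$ is the smallest predicate with $\forall s.\, I(s)\Rightarrow R(s)$ and $\forall s,s'.\, R(s)\land T(s,s')\Rightarrow R(s')$. A safety property is a predicate $P:\Sigma\to\mathit{bool}$; we write $(I,T)\vdash P$ if $\forall s.\,R(s)\Rightarrow P(s)$ (deciding this is the model checking problem). Transition relations are given as top-level conjunctions $T_1\land\cdots\land T_n$, identified with the set of their conjuncts; for $S\subseteq T$, $S$ also denotes the conjunction of its elements. Given $(I,T)\vdash P$, a set $S\subseteq T$ is an inductive validity core (IVC) for $(I,T)\vdash P$ iff $(I,S)\vdash P$; an IVC $S$ is minimal iff there is no IVC $M$ with $M\subsetneq S$. The constructed system may extend the state space with fresh variables. *)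

theory Defs
  imports Main
begin

inductive reach :: "('s \<Rightarrow> bool) \<Rightarrow> ('s \<Rightarrow> 's \<Rightarrow> bool) \<Rightarrow> 's \<Rightarrow> bool"
  for I :: "'s \<Rightarrow> bool" and T :: "'s \<Rightarrow> 's \<Rightarrow> bool" where
  init: "I s \<Longrightarrow> reach I T s"
| step: "reach I T s \<Longrightarrow> T s s' \<Longrightarrow> reach I T s'"

(* A transition relation is a set of conjuncts; the set denotes their conjunction. *)
definition conj_of :: "('s \<Rightarrow> 's \<Rightarrow> bool) set \<Rightarrow> 's \<Rightarrow> 's \<Rightarrow> bool" where
  "conj_of S s s' = (\<forall>t\<in>S. t s s')"

definition models :: "('s \<Rightarrow> bool) \<Rightarrow> ('s \<Rightarrow> 's \<Rightarrow> bool) set \<Rightarrow> ('s \<Rightarrow> bool) \<Rightarrow> bool" where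
  "models I T P = (\<forall>s. reach I (conj_of T) s \<longrightarrow> P s)"

definition is_ivc :: "('s \<Rightarrow> bool) \<Rightarrow> ('s \<Rightarrow> 's \<Rightarrow> bool) set \<Rightarrow> ('s \<Rightarrow> bool)
    \<Rightarrow> ('s \<Rightarrow> 's \<Rightarrow> bool) set \<Rightarrow> bool" where
  "is_ivc I T P S = (S \<subseteq> T \<and> models I S P)"

definition is_min_ivc :: "('s \<Rightarrow> bool) \<Rightarrow> ('s \<Rightarrow> 's \<Rightarrow> bool) set \<Rightarrow> ('s \<Rightarrow> bool)
    \<Rightarrow> ('s \<Rightarrow> 's \<Rightarrow> bool) set \<Rightarrow> bool" where
  "is_min_ivc I T P S = (is_ivc I T P S \<and> \<not> (\<exists>M. M \<subset> S \<and> is_ivc I T P M))"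

(* The explicit (evidently effective) reduction.  The state space is extended
   by two fresh boolean variables st ("started") and d. *)
definition red_I :: "('a \<Rightarrow> bool) \<Rightarrow> ('a \<times> bool \<times> bool) \<Rightarrow> bool" where
  "red_I I = (\<lambda>(s, st, d). \<not> st)"

definition red_P :: "('a \<Rightarrow> bool) \<Rightarrow> ('a \<times> bool \<times> bool) \<Rightarrow> bool" where
  "red_P P = (\<lambda>(s, st, d). \<not> st \<or> P s)"

definition red_A :: "('a \<times> bool \<times> bool) \<Rightarrow> ('a \<times> bool \<times> bool) \<Rightarrow> bool" where
  "red_A = (\<lambda>_ (s', st', d'). \<not> d')"

definition red_B :: "('a \<Rightarrow> bool) \<Rightarrow> ('a \<Rightarrow> 'a \<Rightarrow> bool) set
    \<Rightarrow> ('a \<times> bool \<times> bool) \<Rightarrow> ('a \<times> bool \<times> bool) \<Rightarrow> bool" where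
  "red_B I T = (\<lambda>(s, st, d) (s', st', d'). d' \<and> st' \<and> (if st then conj_of T s s' else I s'))"

definition red_T :: "('a \<Rightarrow> bool) \<Rightarrow> ('a \<Rightarrow> 'a \<Rightarrow> bool) set
    \<Rightarrow> (('a \<times> bool \<times> bool) \<Rightarrow> ('a \<times> bool \<times> bool) \<Rightarrow> bool) set" where
  "red_T I T = {red_A, red_B I T}"

definition red_S :: "('a \<Rightarrow> bool) \<Rightarrow> ('a \<Rightarrow> 'a \<Rightarrow> bool) set
    \<Rightarrow> (('a \<times> bool \<times> bool) \<Rightarrow> ('a \<times> bool \<times> bool) \<Rightarrow> bool) set" where
  "red_S I T = red_T I T"

end

theory Submission
  imports Defs
begin

text \<open>The two conjuncts of the constructed transition relation contradict each other on the
  fresh flag d (A forces it false, B forces it true), so the full system has no transitions at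
  all and only its initial states, where st is false, are reachable; hence P* holds. The only
  proper subsets that could be IVCs are the sets of one conjunct. A alone lets the system jump
  into any started state, in particular one violating P, so it is never an IVC. B alone first
  picks an initial state of (I,T) and then simulates T, so it is an IVC exactly when
  (I,T) \<turnstile> P. Thus the full conjunct set is minimal iff (I,T) \<turnstile> P fails.\<close>

lemma red_A_neq_red_B: "red_A \<noteq> red_B I T"
proof
  assume "red_A = red_B I T"
  then have "red_A (s, False, False) (s, True, False) = red_B I T (s, False, False) (s, True, False)"
    for s by simp
  then show False by (simp add: red_A_def red_B_def)
qed

lemma reach_red_B_started:
  "reach (red_I I) (conj_of {red_B I T}) z \<Longrightarrow> fst (snd z) \<Longrightarrow> reach I (conj_of T) (fst z)"
proof (induction rule: reach.induct)
  case (init z)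
  then show ?case by (auto simp: red_I_def)
next
  case (step z z')
  then show ?case
    by (cases z; cases z') (auto simp: conj_of_def red_B_def intro: reach.intros split: if_splits)
qed

lemma reach_red_B_of_reach:
  "reach I (conj_of T) s \<Longrightarrow> reach (red_I I) (conj_of {red_B I T}) (s, True, True)"
proof (induction rule: reach.induct)
  case (init s)
  have "reach (red_I I) (conj_of {red_B I T}) (s, False, False)"
    by (rule reach.init) (simp add: red_I_def)
  moreover have "conj_of {red_B I T} (s, False, False) (s, True, True)"
    using init by (simp add: conj_of_def red_B_def)
  ultimately show ?case by (rule reach.step)
next
  case (step s s')
  then show ?case by (auto simp: conj_of_def red_B_def intro: reach.step)
qed

lemma models_red_B_iff: "models (red_I I) {red_B I T} (red_P P) \<longleftrightarrow> models I T P"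
proof
  assume models_B: "models (red_I I) {red_B I T} (red_P P)"
  show "models I T P"
    unfolding models_def
  proof (intro allI impI)
    fix s
    assume "reach I (conj_of T) s"
    then have "red_P P (s, True, True)"
      using models_B reach_red_B_of_reach[of I T s] unfolding models_def by blast
    then show "P s" by (simp add: red_P_def)
  qed
next
  assume "models I T P"
  then show "models (red_I I) {red_B I T} (red_P P)"
    unfolding models_def
  proof (intro allI impI)
    fix z
    assume "reach (red_I I) (conj_of {red_B I T}) z"
    with \<open>models I T P\<close> show "red_P P z"
      using reach_red_B_started[of I T z] by (cases z) (auto simp: models_def red_P_def)
  qed
qed

lemma reach_red_T_initial: "reach (red_I I) (conj_of (red_T I T)) z \<Longrightarrow> red_I I z"
  by (induction rule: reach.induct) (auto simp: conj_of_def red_T_def red_A_def red_B_def)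

lemma models_red_T: "models (red_I I) (red_T I T) (red_P P)"
  unfolding models_def
proof (intro allI impI)
  fix z
  assume "reach (red_I I) (conj_of (red_T I T)) z"
  then show "red_P P z"
    using reach_red_T_initial[of I T z] by (cases z) (simp add: red_I_def red_P_def)
qed

lemma not_models_subset_red_A:
  assumes "\<not> P s" and "M \<subseteq> {red_A}"
  shows "\<not> models (red_I I) M (red_P P)"
proof
  assume models: "models (red_I I) M (red_P P)"
  have "reach (red_I I) (conj_of M) (s, False, False)"
    by (rule reach.init) (simp add: red_I_def)
  moreover have "conj_of M (s, False, False) (s, True, False)"
    using assms(2) by (auto simp: conj_of_def red_A_def)
  ultimately have "reach (red_I I) (conj_of M) (s, True, False)" by (rule reach.step)
  with models assms(1) show False by (auto simp: models_def red_P_def)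
qed

lemma is_ivc_red_S: "is_ivc (red_I I) (red_T I T) (red_P P) (red_S I T)"
  using models_red_T by (simp add: is_ivc_def red_S_def)

lemma is_min_ivc_red_S_iff:
  assumes "\<not> P s"
  shows "is_min_ivc (red_I I) (red_T I T) (red_P P) (red_S I T) \<longleftrightarrow> \<not> models I T P"
proof -
  have S: "red_S I T = {red_A, red_B I T}" by (simp add: red_S_def red_T_def)
  have proper_subset: "M \<subset> red_S I T \<Longrightarrow> M \<subseteq> {red_A} \<or> M = {red_B I T}" for M
    unfolding S using red_A_neq_red_B[of I T] by blast
  have B_proper: "{red_B I T} \<subset> red_S I T"
    unfolding S using red_A_neq_red_B[of I T] by blast
  have "(\<exists>M. M \<subset> red_S I T \<and> is_ivc (red_I I) (red_T I T) (red_P P) M)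
      \<longleftrightarrow> models (red_I I) {red_B I T} (red_P P)"
  proof
    assume "\<exists>M. M \<subset> red_S I T \<and> is_ivc (red_I I) (red_T I T) (red_P P) M"
    then obtain M where "M \<subset> red_S I T" and "models (red_I I) M (red_P P)"
      by (auto simp: is_ivc_def)
    with proper_subset not_models_subset_red_A[of P s M I, OF assms]
    show "models (red_I I) {red_B I T} (red_P P)" by auto
  next
    assume "models (red_I I) {red_B I T} (red_P P)"
    then show "\<exists>M. M \<subset> red_S I T \<and> is_ivc (red_I I) (red_T I T) (red_P P) M"
      using B_proper by (auto simp: is_ivc_def red_S_def intro!: exI[of _ "{red_B I T}"])
  qed
  then show ?thesis
    using is_ivc_red_S[of I T P] models_red_B_iff[of I T P] by (simp add: is_min_ivc_def)
qed

theorem theorem1: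
  fixes I :: "'a \<Rightarrow> bool" and T :: "('a \<Rightarrow> 'a \<Rightarrow> bool) set" and P :: "'a \<Rightarrow> bool"
  assumes "finite T"
    and "\<not> (\<forall>s. P s)"
  shows "finite (red_T I T)
       \<and> models (red_I I) (red_T I T) (red_P P)
       \<and> is_ivc (red_I I) (red_T I T) (red_P P) (red_S I T)
       \<and> (is_min_ivc (red_I I) (red_T I T) (red_P P) (red_S I T) \<longleftrightarrow> \<not> models I T P)"
proof -
  obtain s where "\<not> P s" using assms(2) by blast
  then show ?thesis
    using models_red_T[of I T P] is_ivc_red_S[of I T P] is_min_ivc_red_S_iff[of P s I T]
    by (simp add: red_T_def)
qed

end
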